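(* Let $B$ be a symmetric positive definite $3\times3$ matrix with $\det B=1$. Then for every symmetric $3\times3$ matrix $M$, $$\operatorname{tr}(B^{-1}\cdot M)=2\operatorname{tr}\big(\mathbb C(B):M\big).$$ Consequently, for a differentiable path $B(t)$ of symmetric positive definite matrices with $\det B(0)=1$ and $A(t)=A(B(t))$, $\operatorname{tr}A$ is constant in $t$ if and only if $\det B$ is constant in $t$.
   Context: For a symmetric positive definite matrix $B$, $$A(B)=\tfrac12\int_0^\infty \frac{(B+sI)^{-1}\,ds}{\sqrt{\det(B+sI)}},\qquad \mathbb C(B)=\tfrac34\int_0^\infty\frac{\mathcal S\big((B+sI)^{-1}\otimes(B+sI)^{-1}\big)\,ds}{\sqrt{\det(B+sI)}},$$ where $\mathcal S(\mathbb T)_{ijkl}$ is the average of $\mathbb T_{mnpq}$ over all permutations $(m,n,p,q)$ of $(i,j,k,l)$, and $(\mathbb T:M)_{ij}=\sum_{k,l}\mathbb T_{ijkl}M_{kl}$. *)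

theory Defs
  imports "HOL-Analysis.Analysis"
begin

type_synonym mat3 = "real^3^3"
type_synonym tensor4 = "real^3^3^3^3"

definition sym_mat :: "mat3 \<Rightarrow> bool" where
  "sym_mat M \<longleftrightarrow> transpose M = M"

definition pos_def :: "mat3 \<Rightarrow> bool" where
  "pos_def B \<longleftrightarrow> sym_mat B \<and> (\<forall>x::real^3. x \<noteq> 0 \<longrightarrow> x \<bullet> (B *v x) > 0)"

definition tprod :: "mat3 \<Rightarrow> mat3 \<Rightarrow> tensor4" where
  "tprod P Q = (\<chi> i j k l. P $ i $ j * Q $ k $ l)"

definition symz :: "tensor4 \<Rightarrow> tensor4" where
  "symz T = (\<chi> i j k l. (let x = [i, j, k, l] in
      (\<Sum>p\<in>{p. p permutes {0..<4::nat}}. T $ (x ! p 0) $ (x ! p 1) $ (x ! p 2) $ (x ! p 3)) / 24))"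

definition contr :: "tensor4 \<Rightarrow> mat3 \<Rightarrow> mat3" where
  "contr T M = (\<chi> i j. \<Sum>k\<in>UNIV. \<Sum>l\<in>UNIV. T $ i $ j $ k $ l * M $ k $ l)"

definition tensA :: "mat3 \<Rightarrow> mat3" where
  "tensA B = (1/2) *\<^sub>R integral {0..}
     (\<lambda>s::real. (1 / sqrt (det (B + s *\<^sub>R mat 1))) *\<^sub>R matrix_inv (B + s *\<^sub>R mat 1))"

definition tensC :: "mat3 \<Rightarrow> tensor4" where
  "tensC B = (3/4) *\<^sub>R integral {0..}
     (\<lambda>s::real. (1 / sqrt (det (B + s *\<^sub>R mat 1))) *\<^sub>R
        symz (tprod (matrix_inv (B + s *\<^sub>R mat 1)) (matrix_inv (B + s *\<^sub>R mat 1))))"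

end

theory Submission
  imports Defs
begin

text \<open>Write \<open>p(s) = det (B + s I)\<close> and \<open>R(s) = (B + s I)\<^sup>-\<^sup>1\<close>, so that \<open>p' = p tr R\<close> and
  \<open>R' = -R\<^sup>2\<close>. The integrand of \<open>tr A(B)\<close> is then \<open>-(p\<^sup>-\<^sup>1\<^sup>/\<^sup>2)'\<close>, and since
  \<open>tr (S(R \<otimes> R) : M) = (tr R tr (R M) + 2 tr (R\<^sup>2 M)) / 3\<close> for symmetric \<open>R\<close> and \<open>M\<close>, the integrand of
  \<open>2 tr (C(B) : M)\<close> is \<open>-(tr (R M) p\<^sup>-\<^sup>1\<^sup>/\<^sup>2)'\<close>. Both integrals telescope, giving
  \<open>tr A(B) = det B\<^sup>-\<^sup>1\<^sup>/\<^sup>2\<close> and \<open>2 tr (C(B) : M) = tr (B\<^sup>-\<^sup>1 M) det B\<^sup>-\<^sup>1\<^sup>/\<^sup>2\<close>; the first identity also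
  gives the second claim at once. To keep every derivative polynomial, \<open>R\<close> is written as
  \<open>adj (B + s I) / p\<close>, and the growth \<open>p(s) \<ge> m (1 + s)\<^sup>3\<close> for positive definite \<open>B\<close> makes all
  integrands \<open>O((1 + s)\<^sup>-\<^sup>2)\<close>.\<close>

section \<open>Improper integrals on \<open>[0, \<infinity>)\<close>\<close>

lemma integrable_on_vec:
  fixes f :: "'a::euclidean_space \<Rightarrow> 'b::euclidean_space ^ 'n"
  assumes "\<And>i. (\<lambda>x. f x $ i) integrable_on S"
  shows "f integrable_on S"
proof (rule integrable_componentwise)
  fix b :: "'b ^ 'n" assume "b \<in> Basis"
  then obtain i u where "b = axis i u" by (auto simp: Basis_vec_def)
  then show "(\<lambda>x. f x \<bullet> b) integrable_on S"
    using integrable_component[OF assms[of i], of u] by (simp add: inner_axis)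
qed

lemma has_integral_at_top_of_nonneg_derivative:
  fixes F f :: "real \<Rightarrow> real"
  assumes der: "\<And>s. 0 \<le> s \<Longrightarrow> (F has_real_derivative f s) (at s within {0..})"
    and nonneg: "\<And>s. 0 \<le> s \<Longrightarrow> 0 \<le> f s"
    and lim: "(F \<longlongrightarrow> L) at_top"
  shows "(f has_integral (L - F 0)) {0..}"
proof -
  have segment: "(f has_integral (F y - F 0)) {0..y}" if "0 \<le> y" for y
  proof (rule fundamental_theorem_of_calculus[OF that])
    fix x assume "x \<in> {0..y}"
    then have "(F has_real_derivative f x) (at x within {0..y})"
      using der by (auto intro: DERIV_subset[of F "f x" x "{0..}"])
    then show "(F has_vector_derivative f x) (at x within {0..y})"
      by (simp add: has_real_derivative_iff_has_vector_derivative)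
  qed
  show ?thesis
  proof (rule has_integral_to_inf)
    show "f integrable_on {0..y}" for y
      using segment[of y] by (cases "0 \<le> y") (auto simp: integrable_on_def)
    have "\<forall>\<^sub>F y in at_top. integral {0..y} f = F y - F 0"
      using segment by (intro eventually_at_top_linorderI[of 0]) (simp add: integral_unique)
    then show "((\<lambda>y. integral {0..y} f) \<longlongrightarrow> L - F 0) at_top"
      by (rule tendsto_cong[THEN iffD2]) (intro tendsto_intros lim)
  qed (use nonneg in auto)
qed

lemma has_integral_inverse_square_shift:
  "((\<lambda>s::real. K / (1 + s)^2) has_integral K) {0..}"
proof -
  have "((\<lambda>s::real. 1 / (1 + s)^2) has_integral (0 - (-1 / (1 + 0)))) {0..}"
  proof (rule has_integral_at_top_of_nonneg_derivative)
    show "((\<lambda>s. -1 / (1 + s)) has_real_derivative 1 / (1 + s)^2) (at s within {0..})"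
      if "0 \<le> s" for s :: real
      using that by (auto intro!: derivative_eq_intros simp: power2_eq_square)
    show "((\<lambda>s::real. -1 / (1 + s)) \<longlongrightarrow> 0) at_top" by real_asymp
  qed auto
  from has_integral_mult_right[OF this, of K] show ?thesis by simp
qed

lemma integrable_on_if_inverse_square_bound:
  fixes h :: "real \<Rightarrow> real"
  assumes "continuous_on {0..} h" and "\<And>s. 0 \<le> s \<Longrightarrow> \<bar>h s\<bar> \<le> K / (1 + s)^2"
  shows "h integrable_on {0..}"
proof (rule measurable_bounded_by_integrable_imp_integrable)
  show "h \<in> borel_measurable (lebesgue_on {0..})"
    using assms(1) by (rule continuous_imp_measurable_on_sets_lebesgue) auto
  show "(\<lambda>s. K / (1 + s)^2) integrable_on {0..}"
    using has_integral_inverse_square_shift by blast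
qed (use assms(2) in auto)

lemma tendsto_0_if_inverse_square_bound:
  fixes f :: "real \<Rightarrow> real"
  assumes "\<And>s. 0 \<le> s \<Longrightarrow> \<bar>f s\<bar> \<le> K / (1 + s)^2"
  shows "(f \<longlongrightarrow> 0) at_top"
proof (rule Lim_null_comparison)
  show "\<forall>\<^sub>F s in at_top. norm (f s) \<le> K / (1 + s)^2"
    using assms by (intro eventually_at_top_linorderI[of 0]) simp
  show "((\<lambda>s::real. K / (1 + s)^2) \<longlongrightarrow> 0) at_top" by real_asymp
qed

text \<open>Adding the comparison function \<open>K / (1 + s)\<^sup>2\<close> reduces the signed case to the nonnegative one.\<close>
lemma has_integral_at_top_of_derivative:
  fixes F f :: "real \<Rightarrow> real"
  assumes der: "\<And>s. 0 \<le> s \<Longrightarrow> (F has_real_derivative f s) (at s within {0..})"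
    and bound: "\<And>s. 0 \<le> s \<Longrightarrow> \<bar>f s\<bar> \<le> K / (1 + s)^2"
    and lim: "(F \<longlongrightarrow> 0) at_top"
  shows "(f has_integral - F 0) {0..}"
proof -
  have "((\<lambda>s. f s + K / (1 + s)^2) has_integral (0 - (F 0 - K / (1 + 0)))) {0..}"
  proof (rule has_integral_at_top_of_nonneg_derivative)
    show "((\<lambda>s. F s - K / (1 + s)) has_real_derivative f s + K / (1 + s)^2) (at s within {0..})"
      if "0 \<le> s" for s
      using that der[OF that] by (auto intro!: derivative_eq_intros simp: power2_eq_square)
    have "((\<lambda>s::real. K / (1 + s)) \<longlongrightarrow> 0) at_top" by real_asymp
    from tendsto_diff[OF lim this] show "((\<lambda>s. F s - K / (1 + s)) \<longlongrightarrow> 0) at_top" by simp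
    show "0 \<le> f s + K / (1 + s)^2" if "0 \<le> s" for s
      using bound[OF that] by linarith
  qed
  from has_integral_diff[OF this has_integral_inverse_square_shift[of K]] show ?thesis by simp
qed

lemma inverse_square_decay:
  fixes m P C c s :: real and k :: nat
  assumes m: "0 < m" and s: "0 \<le> s" and P: "m * (1 + s)^3 \<le> P" and k: "1 \<le> k"
    and c: "\<bar>c\<bar> \<le> C * (1 + s)^(2*k)"
  shows "\<bar>c\<bar> / (sqrt P * P^k) \<le> C / (sqrt m * m^k) / (1 + s)^2"
proof -
  define u where "u = 1 + s"
  have u: "1 \<le> u" using s by (simp add: u_def)
  have "0 \<le> C * u^(2*k)" using c abs_ge_zero[of c] unfolding u_def by linarith
  moreover have "0 < u^(2*k)" using u by simp
  ultimately have C: "0 \<le> C" by (simp add: zero_le_mult_iff)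
  have "m * u^2 \<le> m * u^3" using m u by (intro mult_left_mono power_increasing) auto
  with P have "sqrt (m * u^2) \<le> sqrt P" by (intro real_sqrt_le_mono) (simp add: u_def)
  then have sqrt_P: "sqrt m * u \<le> sqrt P" using u by (simp add: real_sqrt_mult)
  have "(m * u^3)^k \<le> P^k" using P m u by (intro power_mono) (auto simp: u_def)
  then have "sqrt m * u * (m * u^3)^k \<le> sqrt P * P^k"
    using sqrt_P m u P by (intro mult_mono) (auto simp: u_def intro: order_trans[rotated])
  moreover have "(m * u^3)^k = m^k * u^(3*k)" by (simp add: power_mult_distrib power_mult)
  ultimately have den: "sqrt m * m^k * u^(3*k + 1) \<le> sqrt P * P^k"
    by (simp add: power_add mult_ac)
  have "\<bar>c\<bar> / (sqrt P * P^k) \<le> C * u^(2*k) / (sqrt m * m^k * u^(3*k + 1))"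
    using c m u by (intro frac_le[OF _ _ _ den]) (auto simp: u_def)
  also have "\<dots> = C / (sqrt m * m^k) / u^(k + 1)"
    using m u by (simp add: field_simps power_add[symmetric] mult_2)
  also have "\<dots> \<le> C / (sqrt m * m^k) / u^2"
    using C m u k by (intro divide_left_mono power_increasing mult_pos_pos) auto
  finally show ?thesis by (simp add: u_def)
qed

section \<open>Adjugates and traces of \<open>3 \<times> 3\<close> matrices\<close>

definition adj3 :: "mat3 \<Rightarrow> mat3" where
  "adj3 a = vector [
     vector [a$2$2*a$3$3 - a$2$3*a$3$2, a$1$3*a$3$2 - a$1$2*a$3$3, a$1$2*a$2$3 - a$1$3*a$2$2],
     vector [a$2$3*a$3$1 - a$2$1*a$3$3, a$1$1*a$3$3 - a$1$3*a$3$1, a$1$3*a$2$1 - a$1$1*a$2$3],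
     vector [a$2$1*a$3$2 - a$2$2*a$3$1, a$1$2*a$3$1 - a$1$1*a$3$2, a$1$1*a$2$2 - a$1$2*a$2$1]]"

lemma mat_1_nth: "(mat 1 :: 'a::{zero,one}^'n^'n) $ i $ j = (if i = j then 1 else 0)"
  by (simp add: mat_def)

lemma matrix_mul_adj3: "a ** adj3 a = det a *\<^sub>R mat 1"
  unfolding vec_eq_iff forall_3
  by (simp add: adj3_def matrix_matrix_mult_def sum_3 det_3 mat_1_nth algebra_simps)

lemma adj3_matrix_mul: "adj3 a ** a = det a *\<^sub>R mat 1"
  unfolding vec_eq_iff forall_3
  by (simp add: adj3_def matrix_matrix_mult_def sum_3 det_3 mat_1_nth algebra_simps)

lemma matrix_inv_eq_adj3:
  assumes "det a \<noteq> 0"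
  shows "matrix_inv a = (1 / det a) *\<^sub>R adj3 a"
proof -
  let ?A = "(1 / det a) *\<^sub>R adj3 a"
  have right: "a ** ?A = mat 1" and left: "?A ** a = mat 1"
    using assms by (simp_all add: matrix_scalar_ac scalar_matrix_assoc[symmetric]
        matrix_mul_adj3 adj3_matrix_mul)
  have inv: "a ** matrix_inv a = mat 1 \<and> matrix_inv a ** a = mat 1"
    unfolding matrix_inv_def by (rule someI[of _ ?A]) (use right left in auto)
  have "matrix_inv a = matrix_inv a ** (a ** ?A)" by (simp add: right)
  also have "\<dots> = ?A" using inv by (simp add: matrix_mul_assoc)
  finally show ?thesis .
qed

lemma inverse_sqrt_det_scaleR_matrix_inv:
  "0 < det X \<Longrightarrow> (1 / sqrt (det X)) *\<^sub>R matrix_inv X = (1 / (sqrt (det X) * det X)) *\<^sub>R adj3 X"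
  by (simp add: matrix_inv_eq_adj3)

lemma adj3_trace_identity:
  "det a * (trace a * trace M - trace (a ** M)) =
   trace (adj3 a) * trace (adj3 a ** M) - trace (adj3 a ** adj3 a ** M)"
  by (simp add: det_3 trace_def sum_3 adj3_def matrix_matrix_mult_def algebra_simps)

lemma adj3_entry_bound:
  assumes "\<And>i j. \<bar>a$i$j\<bar> \<le> L"
  shows "\<bar>adj3 a $ i $ j\<bar> \<le> 2 * L^2"
proof -
  have prod: "\<bar>a$i$j * a$k$l\<bar> \<le> L^2" for i j k l
    unfolding abs_mult power2_eq_square by (rule mult_mono) (use assms[of i j] assms[of k l] in auto)
  have "\<bar>a$i$j * a$k$l - a$i'$j' * a$k'$l'\<bar> \<le> 2 * L^2" for i j k l i' j' k' l'
    using prod[of i j k l] prod[of i' j' k' l'] by linarith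
  then show ?thesis
    using exhaust_3[of i] exhaust_3[of j] by (auto simp: adj3_def)
qed

lemma sym_mat_lower_entries:
  assumes "sym_mat R"
  shows "R$2$1 = R$1$2" "R$3$1 = R$1$3" "R$3$2 = R$2$3"
proof -
  have "transpose R $ i $ j = R $ i $ j" for i j using assms by (simp add: sym_mat_def)
  then have "R $ j $ i = R $ i $ j" for i j by (simp add: transpose_def)
  then show "R$2$1 = R$1$2" "R$3$1 = R$1$3" "R$3$2 = R$2$3" by auto
qed

lemma sym_mat_adj3:
  assumes "sym_mat a"
  shows "sym_mat (adj3 a)"
  using sym_mat_lower_entries[OF assms] unfolding sym_mat_def vec_eq_iff forall_3
  by (simp add: transpose_def adj3_def algebra_simps)

lemma trace_scaleR: "trace (c *\<^sub>R (X :: real^'n^'n)) = c * trace X"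
  by (simp add: trace_def sum_distrib_left)

lemma bounded_linear_trace: "bounded_linear (trace :: real^'n^'n \<Rightarrow> real)"
  by (rule linear_conv_bounded_linear[THEN iffD1], rule linearI)
     (simp_all add: trace_def sum.distrib sum_distrib_left)

lemma abs_trace_bounds:
  fixes A M :: mat3
  assumes A: "\<And>i j. \<bar>A$i$j\<bar> \<le> \<alpha>"
  shows "\<bar>trace A\<bar> \<le> 3 * \<alpha>"
    "\<bar>trace (A ** M)\<bar> \<le> \<alpha> * (\<Sum>i\<in>UNIV. \<Sum>j\<in>UNIV. \<bar>M$i$j\<bar>)"
    "\<bar>trace (A ** A ** M)\<bar> \<le> 3 * \<alpha>^2 * (\<Sum>i\<in>UNIV. \<Sum>j\<in>UNIV. \<bar>M$i$j\<bar>)"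
proof -
  let ?\<mu> = "\<Sum>i\<in>UNIV. \<Sum>j\<in>UNIV. \<bar>M$i$j\<bar>"
  show "\<bar>trace A\<bar> \<le> 3 * \<alpha>"
    unfolding trace_def sum_3 using A[of 1 1] A[of 2 2] A[of 3 3] by linarith
  have mult: "\<bar>trace (C ** M)\<bar> \<le> \<beta> * ?\<mu>" if C: "\<And>i j. \<bar>C$i$j\<bar> \<le> \<beta>" for C :: mat3 and \<beta>
  proof -
    have "\<bar>trace (C ** M)\<bar> \<le> (\<Sum>i\<in>UNIV. \<Sum>k\<in>UNIV. \<bar>C$i$k\<bar> * \<bar>M$k$i\<bar>)"
      unfolding trace_def matrix_matrix_mult_def vec_lambda_beta abs_mult[symmetric]
      by (rule order_trans[OF sum_abs], intro sum_mono sum_abs)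
    also have "\<dots> \<le> (\<Sum>i\<in>UNIV. \<Sum>k\<in>UNIV. \<beta> * \<bar>M$k$i\<bar>)"
      by (intro sum_mono mult_right_mono C) auto
    also have "\<dots> = \<beta> * ?\<mu>"
      by (subst sum.swap) (simp add: sum_distrib_left)
    finally show ?thesis .
  qed
  show "\<bar>trace (A ** M)\<bar> \<le> \<alpha> * ?\<mu>" by (rule mult[OF A])
  have "\<bar>(A ** A)$i$j\<bar> \<le> 3 * \<alpha>^2" for i j
  proof -
    have "\<bar>(A ** A)$i$j\<bar> \<le> (\<Sum>k\<in>UNIV. \<bar>A$i$k\<bar> * \<bar>A$k$j\<bar>)"
      unfolding matrix_matrix_mult_def vec_lambda_beta abs_mult[symmetric] by (rule sum_abs)
    also have "\<dots> \<le> (\<Sum>k\<in>(UNIV::3 set). \<alpha> * \<alpha>)"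
      using A[of 1 1] by (intro sum_mono mult_mono A) auto
    finally show ?thesis by (simp add: power2_eq_square)
  qed
  then show "\<bar>trace (A ** A ** M)\<bar> \<le> 3 * \<alpha>^2 * ?\<mu>" by (rule mult)
qed

lemma abs_trace_quadratic_bound:
  fixes A M :: mat3
  assumes "\<And>i j. \<bar>A$i$j\<bar> \<le> \<alpha>"
  shows "\<bar>trace A * trace (A ** M) + 2 * trace (A ** A ** M)\<bar>
           \<le> 9 * \<alpha>^2 * (\<Sum>i\<in>UNIV. \<Sum>j\<in>UNIV. \<bar>M$i$j\<bar>)"
proof -
  note bounds = abs_trace_bounds(1)[OF assms] abs_trace_bounds(2,3)[OF assms, of M]
  have "0 \<le> \<alpha>" using assms[of 1 1] by linarith
  then have "\<bar>trace A * trace (A ** M)\<bar> \<le> 3 * \<alpha> * (\<alpha> * (\<Sum>i\<in>UNIV. \<Sum>j\<in>UNIV. \<bar>M$i$j\<bar>))"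
    unfolding abs_mult by (intro mult_mono bounds(1,2)) auto
  then show ?thesis
    using bounds(3) abs_triangle_ineq[of "trace A * trace (A ** M)" "2 * trace (A ** A ** M)"]
    by (simp add: power2_eq_square)
qed

section \<open>The symmetrised tensor square\<close>

lemma sum_permutations_4:
  fixes g :: "nat \<Rightarrow> nat \<Rightarrow> nat \<Rightarrow> nat \<Rightarrow> 'a::comm_monoid_add"
  shows "(\<Sum>p\<in>{p. p permutes {0..<4::nat}}. g (p 0) (p 1) (p 2) (p 3)) =
   g 0 1 2 3 + g 0 1 3 2 + g 0 2 1 3 + g 0 2 3 1 + g 0 3 1 2 + g 0 3 2 1 +
   g 1 0 2 3 + g 1 0 3 2 + g 1 2 0 3 + g 1 2 3 0 + g 1 3 0 2 + g 1 3 2 0 +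
   g 2 0 1 3 + g 2 0 3 1 + g 2 1 0 3 + g 2 1 3 0 + g 2 3 0 1 + g 2 3 1 0 +
   g 3 0 1 2 + g 3 0 2 1 + g 3 1 0 2 + g 3 1 2 0 + g 3 2 0 1 + g 3 2 1 0"
proof -
  have "{0..<4::nat} = insert 0 (insert 1 (insert 2 {3}))" by auto
  then show ?thesis
    by (simp add: sum_over_permutations_insert permutes_sing Transposition.transpose_def add_ac)
qed

lemma abs_symz_le:
  assumes "\<And>a b c d. \<bar>T$a$b$c$d\<bar> \<le> C"
  shows "\<bar>symz T $ i $ j $ k $ l\<bar> \<le> C"
proof -
  let ?P = "{p. p permutes {0..<4::nat}}"
  let ?x = "[i, j, k, l]"
  have "card ?P = 24" using card_permutations[of "{0..<4::nat}" 4] by (simp add: fact_numeral)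
  have "\<bar>\<Sum>p\<in>?P. T $ (?x ! p 0) $ (?x ! p 1) $ (?x ! p 2) $ (?x ! p 3)\<bar> \<le> (\<Sum>p\<in>?P. C)"
    by (rule order_trans[OF sum_abs]) (intro sum_mono assms)
  also have "\<dots> = 24 * C" using \<open>card ?P = 24\<close> by simp
  finally show ?thesis by (simp add: symz_def Let_def)
qed

lemma symz_scaleR: "symz (c *\<^sub>R T) = c *\<^sub>R symz T"
  by (simp add: symz_def vec_eq_iff Let_def sum_distrib_left)

lemma tprod_scaleR: "tprod (c *\<^sub>R P) (c *\<^sub>R P) = c^2 *\<^sub>R tprod P P"
  by (simp add: tprod_def vec_eq_iff power2_eq_square)

lemma inverse_sqrt_det_scaleR_symz_matrix_inv:
  assumes "0 < det X"
  shows "(1 / sqrt (det X)) *\<^sub>R symz (tprod (matrix_inv X) (matrix_inv X))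
       = (1 / (sqrt (det X) * det X^2)) *\<^sub>R symz (tprod (adj3 X) (adj3 X))"
  using assms by (simp add: matrix_inv_eq_adj3 tprod_scaleR symz_scaleR power2_eq_square)

lemma continuous_on_symz:
  assumes "\<And>a b c d. continuous_on S (\<lambda>s. T s $ a $ b $ c $ d)"
  shows "continuous_on S (\<lambda>s. symz (T s) $ i $ j $ k $ l)"
  unfolding symz_def Let_def vec_lambda_beta
  by (intro continuous_on_divide continuous_on_sum continuous_on_const assms) auto

lemma trace_contr_symz_tprod:
  assumes R: "sym_mat R" and M: "sym_mat M"
  shows "trace (contr (symz (tprod R R)) M) =
     (trace R * trace (R ** M) + 2 * trace (R ** R ** M)) / 3"
proof -
  note sR = sym_mat_lower_entries[OF R] and sM = sym_mat_lower_entries[OF M]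
  have P: "(\<Sum>p\<in>{p. p permutes {0..<4::nat}}. tprod R R $ (x ! p 0) $ (x ! p 1) $ (x ! p 2) $ (x ! p 3))
     = (let h = (\<lambda>a b c d. tprod R R $ (x ! a) $ (x ! b) $ (x ! c) $ (x ! d)) in
   h 0 1 2 3 + h 0 1 3 2 + h 0 2 1 3 + h 0 2 3 1 + h 0 3 1 2 + h 0 3 2 1 +
   h 1 0 2 3 + h 1 0 3 2 + h 1 2 0 3 + h 1 2 3 0 + h 1 3 0 2 + h 1 3 2 0 +
   h 2 0 1 3 + h 2 0 3 1 + h 2 1 0 3 + h 2 1 3 0 + h 2 3 0 1 + h 2 3 1 0 +
   h 3 0 1 2 + h 3 0 2 1 + h 3 1 0 2 + h 3 1 2 0 + h 3 2 0 1 + h 3 2 1 0)" for x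
    unfolding Let_def by (rule sum_permutations_4)
  show ?thesis
    unfolding trace_def contr_def symz_def
    apply (simp only: vec_lambda_beta Let_def P)
    apply (simp add: tprod_def sum_3 matrix_matrix_mult_def sR sM)
    apply (simp add: field_simps)
    done
qed

lemma trace_contr_scaleR: "trace (contr (c *\<^sub>R T) M) = c * trace (contr T M)"
  by (simp add: trace_def contr_def sum_distrib_left mult.assoc)

lemma bounded_linear_trace_contr: "bounded_linear (\<lambda>T. trace (contr T M))"
  by (rule linear_conv_bounded_linear[THEN iffD1], rule linearI)
     (simp_all add: trace_def contr_def sum.distrib sum_distrib_left algebra_simps)

section \<open>The shifted matrix \<open>B + s I\<close>\<close>

lemma shift_nth: "(B + s *\<^sub>R mat 1 :: real^'n^'n) $ i $ j = B$i$j + (if i = j then s else 0)"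
  by (simp add: mat_def)

lemma sym_mat_shift: "sym_mat B \<Longrightarrow> sym_mat (B + s *\<^sub>R mat 1)"
  by (simp add: sym_mat_def transpose_def vec_eq_iff mat_def)

lemma has_real_derivative_det_shift:
  "((\<lambda>s. det (B + s *\<^sub>R mat 1 :: mat3)) has_real_derivative trace (adj3 (B + s *\<^sub>R mat 1)))
     (at s within S)"
  apply (simp add: det_3 shift_nth trace_def sum_3 adj3_def mat_1_nth)
  apply (rule derivative_eq_intros refl | simp)+
  apply (simp add: algebra_simps)
  done

lemma has_real_derivative_trace_adj3_shift:
  "((\<lambda>s. trace (adj3 (B + s *\<^sub>R mat 1 :: mat3) ** M)) has_real_derivative
     trace (B + s *\<^sub>R mat 1) * trace M - trace ((B + s *\<^sub>R mat 1) ** M)) (at s within S)"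
  apply (simp add: shift_nth trace_def sum_3 adj3_def mat_1_nth matrix_matrix_mult_def)
  apply (rule derivative_eq_intros refl | simp)+
  apply (simp add: algebra_simps)
  done

lemma has_real_derivative_inverse_sqrt_det_shift:
  assumes "0 < det (B + s *\<^sub>R mat 1 :: mat3)"
  shows "((\<lambda>s. - 2 / sqrt (det (B + s *\<^sub>R mat 1))) has_real_derivative
           trace (adj3 (B + s *\<^sub>R mat 1)) / (sqrt (det (B + s *\<^sub>R mat 1)) * det (B + s *\<^sub>R mat 1)))
         (at s within S)"
  using assms by (auto intro!: derivative_eq_intros has_real_derivative_det_shift simp: field_simps)

lemma has_real_derivative_trace_adj3_quotient_shift:
  fixes B M :: mat3
  assumes "0 < det (B + s *\<^sub>R mat 1)"
  shows "((\<lambda>s. - trace (adj3 (B + s *\<^sub>R mat 1) ** M) / (sqrt (det (B + s *\<^sub>R mat 1)) * det (B + s *\<^sub>R mat 1)))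
           has_real_derivative
           (trace (adj3 (B + s *\<^sub>R mat 1)) * trace (adj3 (B + s *\<^sub>R mat 1) ** M)
             + 2 * trace (adj3 (B + s *\<^sub>R mat 1) ** adj3 (B + s *\<^sub>R mat 1) ** M)) / 2
             / (sqrt (det (B + s *\<^sub>R mat 1)) * det (B + s *\<^sub>R mat 1)^2)) (at s within S)"
proof -
  define p where "p s = det (B + s *\<^sub>R mat 1)" for s
  define A where "A s = adj3 (B + s *\<^sub>R mat 1)" for s
  define q where "q s = trace (A s ** M)" for s
  have pos: "0 < p s" using assms by (simp add: p_def)
  have dp: "(p has_real_derivative trace (A s)) (at s within S)"
    unfolding p_def A_def by (rule has_real_derivative_det_shift)
  have "(q has_real_derivative trace (B + s *\<^sub>R mat 1) * trace M - trace ((B + s *\<^sub>R mat 1) ** M))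
      (at s within S)"
    unfolding q_def A_def by (rule has_real_derivative_trace_adj3_shift)
  moreover have "trace (B + s *\<^sub>R mat 1) * trace M - trace ((B + s *\<^sub>R mat 1) ** M)
      = (trace (A s) * q s - trace (A s ** A s ** M)) / p s"
    using adj3_trace_identity[of "B + s *\<^sub>R mat 1" M] pos by (simp add: A_def q_def p_def field_simps)
  ultimately have dq: "(q has_real_derivative (trace (A s) * q s - trace (A s ** A s ** M)) / p s)
      (at s within S)" by simp
  have "((\<lambda>s. - q s / (sqrt (p s) * p s)) has_real_derivative
      (trace (A s) * q s + 2 * trace (A s ** A s ** M)) / 2 / (sqrt (p s) * p s^2)) (at s within S)"
    using pos by (auto intro!: derivative_eq_intros dp dq simp: field_simps power2_eq_square)
  then show ?thesis by (simp add: p_def A_def q_def)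
qed

lemma continuous_on_adj3_shift: "continuous_on S (\<lambda>s. adj3 (B + s *\<^sub>R mat 1 :: mat3) $ i $ j)"
  using exhaust_3[of i] exhaust_3[of j]
  apply (elim disjE)
  apply (simp_all add: adj3_def shift_nth mat_1_nth)
  apply (auto intro!: continuous_intros)
  done

lemma continuous_on_det_shift: "continuous_on S (\<lambda>s. det (B + s *\<^sub>R mat 1 :: mat3))"
  by (auto simp: det_3 shift_nth mat_1_nth intro!: continuous_intros)

lemma adj3_shift_entry_bound:
  fixes B :: mat3
  obtains K where "0 \<le> K" "\<And>s i j. 0 \<le> s \<Longrightarrow> \<bar>adj3 (B + s *\<^sub>R mat 1) $ i $ j\<bar> \<le> K * (1 + s)^2"
proof -
  define N where "N = 1 + (\<Sum>i\<in>UNIV. \<Sum>j\<in>UNIV. \<bar>B$i$j\<bar>)"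
  have entry: "\<bar>B$i$j\<bar> \<le> N - 1" for i j
    unfolding N_def using member_le_sum[of i UNIV "\<lambda>i. \<Sum>j\<in>UNIV. \<bar>B$i$j\<bar>"]
      member_le_sum[of j UNIV "\<lambda>j. \<bar>B$i$j\<bar>"] by (force intro: sum_nonneg)
  have N: "1 \<le> N" using entry[of 1 1] abs_ge_zero[of "B$1$1"] by linarith
  have "\<bar>adj3 (B + s *\<^sub>R mat 1) $ i $ j\<bar> \<le> (2 * N^2) * (1 + s)^2" if s: "0 \<le> s" for s i j
  proof -
    have "\<bar>(B + s *\<^sub>R mat 1) $ i $ j\<bar> \<le> N * (1 + s)" for i j
    proof -
      have "\<bar>(B + s *\<^sub>R mat 1) $ i $ j\<bar> \<le> \<bar>B$i$j\<bar> + s"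
        unfolding shift_nth using s by auto
      then show ?thesis using entry[of i j] mult_right_mono[OF N s] unfolding distrib_left by linarith
    qed
    from adj3_entry_bound[OF this, of i j] show ?thesis by (simp add: power_mult_distrib)
  qed
  then show ?thesis using that[of "2 * N^2"] by simp
qed

lemma pos_def_quadratic_form_pos:
  fixes B :: mat3
  assumes "pos_def B" and "x1 \<noteq> 0 \<or> x2 \<noteq> 0 \<or> x3 \<noteq> 0"
  shows "0 < x1*(B$1$1*x1 + B$1$2*x2 + B$1$3*x3) + x2*(B$2$1*x1 + B$2$2*x2 + B$2$3*x3)
           + x3*(B$3$1*x1 + B$3$2*x2 + B$3$3*x3)"
proof -
  have "(vector [x1, x2, x3] :: real^3) \<noteq> 0"
  proof
    assume "(vector [x1, x2, x3] :: real^3) = 0"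
    then have "(vector [x1, x2, x3] :: real^3) $ k = 0" for k by simp
    from this[of 1] this[of 2] this[of 3] show False using assms(2) by simp
  qed
  then have "0 < (vector [x1, x2, x3] :: real^3) \<bullet> (B *v vector [x1, x2, x3])"
    using assms(1) unfolding pos_def_def by blast
  then show ?thesis by (simp add: inner_vec_def matrix_vector_mult_def sum_3)
qed

lemma det_shift_expand:
  assumes "sym_mat B"
  shows "det (B + s *\<^sub>R mat 1 :: mat3) =
   s^3 + (B$1$1 + B$2$2 + B$3$3) * s^2 +
   ((B$1$1*B$2$2 - B$1$2^2) + (B$1$1*B$3$3 - B$1$3^2) + (B$2$2*B$3$3 - B$2$3^2)) * s + det B"
  using sym_mat_lower_entries[OF assms]
  by (simp add: det_3 mat_def power2_eq_square power3_eq_cube algebra_simps)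

text \<open>The three coefficients of \<open>det (B + s I)\<close> are positive: each is tested on a suitable vector,
  the last one on a column of the adjugate.\<close>
lemma pos_def_det_shift_coeffs_pos:
  assumes P: "pos_def B"
  shows "0 < B$1$1 + B$2$2 + B$3$3"
    "0 < (B$1$1*B$2$2 - B$1$2^2) + (B$1$1*B$3$3 - B$1$3^2) + (B$2$2*B$3$3 - B$2$3^2)"
    "0 < det B"
proof -
  note s = sym_mat_lower_entries[OF P[unfolded pos_def_def, THEN conjunct1]]
  have d1: "0 < B$1$1" using pos_def_quadratic_form_pos[OF P, of 1 0 0] by simp
  have d2: "0 < B$2$2" using pos_def_quadratic_form_pos[OF P, of 0 1 0] by simp
  have d3: "0 < B$3$3" using pos_def_quadratic_form_pos[OF P, of 0 0 1] by simp
  show "0 < B$1$1 + B$2$2 + B$3$3" using d1 d2 d3 by simp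
  have "0 < B$1$1 * (B$1$1*B$2$2 - B$1$2^2)"
    using pos_def_quadratic_form_pos[OF P, of "-B$1$2" "B$1$1" 0] d1 s
    by (simp add: algebra_simps power2_eq_square)
  then have m12: "0 < B$1$1*B$2$2 - B$1$2^2" using d1 by (simp add: zero_less_mult_iff)
  have "0 < B$1$1 * (B$1$1*B$3$3 - B$1$3^2)"
    using pos_def_quadratic_form_pos[OF P, of "-B$1$3" 0 "B$1$1"] d1 s
    by (simp add: algebra_simps power2_eq_square)
  then have m13: "0 < B$1$1*B$3$3 - B$1$3^2" using d1 by (simp add: zero_less_mult_iff)
  have "0 < B$2$2 * (B$2$2*B$3$3 - B$2$3^2)"
    using pos_def_quadratic_form_pos[OF P, of 0 "-B$2$3" "B$2$2"] d2 s
    by (simp add: algebra_simps power2_eq_square)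
  then have m23: "0 < B$2$2*B$3$3 - B$2$3^2" using d2 by (simp add: zero_less_mult_iff)
  show "0 < (B$1$1*B$2$2 - B$1$2^2) + (B$1$1*B$3$3 - B$1$3^2) + (B$2$2*B$3$3 - B$2$3^2)"
    using m12 m13 m23 by simp
  have "0 < (B$2$2*B$3$3 - B$2$3^2) * det B"
    using pos_def_quadratic_form_pos[OF P, of "adj3 B $1$1" "adj3 B $2$1" "adj3 B $3$1"] m23 s
    by (simp add: adj3_def det_3 algebra_simps power2_eq_square)
  then show "0 < det B" using m23 by (simp add: zero_less_mult_iff)
qed

lemma pos_def_det_pos: "pos_def B \<Longrightarrow> 0 < det B"
  by (rule pos_def_det_shift_coeffs_pos(3))

lemma pos_def_shift:
  assumes "pos_def B" and "0 \<le> s"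
  shows "pos_def (B + s *\<^sub>R mat 1)"
proof -
  have "x \<bullet> ((B + s *\<^sub>R mat 1) *v x) = x \<bullet> (B *v x) + s * (x \<bullet> x)" for x :: "real^3"
    by (simp add: matrix_vector_mult_add_rdistrib inner_add_right scaleR_matrix_vector_assoc[symmetric])
  with assms show ?thesis
    by (auto simp: pos_def_def sym_mat_shift intro: add_pos_nonneg)
qed

lemma det_shift_lower_bound:
  assumes P: "pos_def B"
  obtains m where "0 < m" "\<And>s. 0 \<le> s \<Longrightarrow> m * (1 + s)^3 \<le> det (B + s *\<^sub>R mat 1)"
proof -
  define a where "a = B$1$1 + B$2$2 + B$3$3"
  define b where "b = (B$1$1*B$2$2 - B$1$2^2) + (B$1$1*B$3$3 - B$1$3^2) + (B$2$2*B$3$3 - B$2$3^2)"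
  define c where "c = det B"
  have a: "0 < a" and b: "0 < b" and c: "0 < c"
    using pos_def_det_shift_coeffs_pos[OF P] by (auto simp: a_def b_def c_def)
  define m where "m = min 1 (min (a/3) (min (b/3) c))"
  have "m * (1 + s)^3 \<le> det (B + s *\<^sub>R mat 1)" if s: "0 \<le> s" for s
  proof -
    have "det (B + s *\<^sub>R mat 1) = s^3 + a * s^2 + b * s + c"
      using det_shift_expand P by (simp add: pos_def_def a_def b_def c_def)
    moreover have "m * s^3 \<le> s^3"
      using s a b c by (intro mult_left_le_one_le) (auto simp: m_def)
    moreover have "3 * m * s^2 \<le> a * s^2" "3 * m * s \<le> b * s" "m \<le> c"
      using s by (auto simp: m_def intro!: mult_right_mono)
    ultimately show ?thesis by (simp add: power3_eq_cube power2_eq_square algebra_simps)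
  qed
  moreover have "0 < m" using a b c by (simp add: m_def)
  ultimately show ?thesis using that by blast
qed

lemma det_shift_tendsto_at_top:
  assumes "pos_def B"
  shows "filterlim (\<lambda>s. det (B + s *\<^sub>R mat 1)) at_top at_top"
proof -
  obtain m where m: "0 < m" and lower: "\<And>s. 0 \<le> s \<Longrightarrow> m * (1 + s)^3 \<le> det (B + s *\<^sub>R mat 1)"
    using det_shift_lower_bound[OF assms] by blast
  have "filterlim (\<lambda>s::real. m * (1 + s)^3) at_top at_top" using m by real_asymp
  then show ?thesis
    by (rule filterlim_at_top_mono) (use lower in \<open>auto intro: eventually_at_top_linorderI[of 0]\<close>)
qed

section \<open>The traces of \<open>A(B)\<close> and \<open>C(B)\<close>\<close>

lemma integrable_adj3_shift:
  assumes "pos_def B"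
  shows "(\<lambda>s. (1 / (sqrt (det (B + s *\<^sub>R mat 1)) * det (B + s *\<^sub>R mat 1))) *\<^sub>R adj3 (B + s *\<^sub>R mat 1))
           integrable_on {0..}"
proof -
  obtain m where m: "0 < m" and lower: "\<And>s. 0 \<le> s \<Longrightarrow> m * (1 + s)^3 \<le> det (B + s *\<^sub>R mat 1)"
    using det_shift_lower_bound[OF assms] by blast
  obtain K where "\<And>s i j. 0 \<le> s \<Longrightarrow> \<bar>adj3 (B + s *\<^sub>R mat 1) $ i $ j\<bar> \<le> K * (1 + s)^2"
    using adj3_shift_entry_bound by blast
  then have bound: "\<bar>adj3 (B + s *\<^sub>R mat 1) $ i $ j\<bar> \<le> K * (1 + s)^(2*1)" if "0 \<le> s" for s i j
    using that by simp
  have pos: "0 < det (B + s *\<^sub>R mat 1)" if "s \<in> {0..}" for s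
    using that assms by (simp add: pos_def_det_pos pos_def_shift)
  show ?thesis
  proof (intro integrable_on_vec integrable_on_if_inverse_square_bound)
    fix i j
    show "continuous_on {0..} (\<lambda>s. ((1 / (sqrt (det (B + s *\<^sub>R mat 1)) * det (B + s *\<^sub>R mat 1))) *\<^sub>R
        adj3 (B + s *\<^sub>R mat 1)) $ i $ j)"
      by (auto intro!: continuous_intros continuous_on_adj3_shift continuous_on_det_shift)
         (use pos in force)
    show "\<bar>((1 / (sqrt (det (B + s *\<^sub>R mat 1)) * det (B + s *\<^sub>R mat 1))) *\<^sub>R
        adj3 (B + s *\<^sub>R mat 1)) $ i $ j\<bar> \<le> K / (sqrt m * m) / (1 + s)^2" if "0 \<le> s" for s
      using inverse_square_decay[where k=1, OF m that lower[OF that] _ bound[OF that, of i j]] pos[of s] that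
      by (simp add: abs_mult)
  qed
qed

lemma integrable_symz_adj3_shift:
  assumes "pos_def B"
  shows "(\<lambda>s. (1 / (sqrt (det (B + s *\<^sub>R mat 1)) * det (B + s *\<^sub>R mat 1)^2)) *\<^sub>R
           symz (tprod (adj3 (B + s *\<^sub>R mat 1)) (adj3 (B + s *\<^sub>R mat 1)))) integrable_on {0..}"
proof -
  obtain m where m: "0 < m" and lower: "\<And>s. 0 \<le> s \<Longrightarrow> m * (1 + s)^3 \<le> det (B + s *\<^sub>R mat 1)"
    using det_shift_lower_bound[OF assms] by blast
  obtain K where K: "0 \<le> K"
    and adj: "\<And>s i j. 0 \<le> s \<Longrightarrow> \<bar>adj3 (B + s *\<^sub>R mat 1) $ i $ j\<bar> \<le> K * (1 + s)^2"
    using adj3_shift_entry_bound by auto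
  have bound: "\<bar>symz (tprod (adj3 (B + s *\<^sub>R mat 1)) (adj3 (B + s *\<^sub>R mat 1))) $ i $ j $ k $ l\<bar>
        \<le> K^2 * (1 + s)^(2*2)" if "0 \<le> s" for s i j k l
  proof (rule abs_symz_le)
    fix a b c d
    show "\<bar>tprod (adj3 (B + s *\<^sub>R mat 1)) (adj3 (B + s *\<^sub>R mat 1)) $ a $ b $ c $ d\<bar> \<le> K^2 * (1 + s)^(2*2)"
      unfolding tprod_def vec_lambda_beta abs_mult
      using mult_mono[OF adj[OF that, of a b] adj[OF that, of c d]] K that
      by (simp add: power_mult power2_eq_square power4_eq_xxxx mult_ac)
  qed
  have pos: "0 < det (B + s *\<^sub>R mat 1)" if "s \<in> {0..}" for s
    using that assms by (simp add: pos_def_det_pos pos_def_shift)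
  show ?thesis
  proof (intro integrable_on_vec integrable_on_if_inverse_square_bound)
    fix i j k l
    show "continuous_on {0..} (\<lambda>s. ((1 / (sqrt (det (B + s *\<^sub>R mat 1)) * det (B + s *\<^sub>R mat 1)^2)) *\<^sub>R
        symz (tprod (adj3 (B + s *\<^sub>R mat 1)) (adj3 (B + s *\<^sub>R mat 1)))) $ i $ j $ k $ l)"
      by (auto intro!: continuous_intros continuous_on_symz continuous_on_adj3_shift continuous_on_det_shift
          simp: tprod_def) (use pos in force)
    show "\<bar>((1 / (sqrt (det (B + s *\<^sub>R mat 1)) * det (B + s *\<^sub>R mat 1)^2)) *\<^sub>R
        symz (tprod (adj3 (B + s *\<^sub>R mat 1)) (adj3 (B + s *\<^sub>R mat 1)))) $ i $ j $ k $ l\<bar>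
        \<le> K^2 / (sqrt m * m^2) / (1 + s)^2" if "0 \<le> s" for s
      using inverse_square_decay[where k=2, OF m that lower[OF that] _ bound[OF that, of i j k l]]
        pos[of s] that
      by (simp add: abs_mult)
  qed
qed

lemma has_integral_trace_adj3_shift:
  assumes "pos_def B"
  shows "((\<lambda>s. trace (adj3 (B + s *\<^sub>R mat 1)) / (sqrt (det (B + s *\<^sub>R mat 1)) * det (B + s *\<^sub>R mat 1)))
           has_integral 2 / sqrt (det B)) {0..}"
proof -
  obtain m where m: "0 < m" and lower: "\<And>s. 0 \<le> s \<Longrightarrow> m * (1 + s)^3 \<le> det (B + s *\<^sub>R mat 1)"
    using det_shift_lower_bound[OF assms] by blast
  obtain K where adj: "\<And>s i j. 0 \<le> s \<Longrightarrow> \<bar>adj3 (B + s *\<^sub>R mat 1) $ i $ j\<bar> \<le> K * (1 + s)^2"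
    using adj3_shift_entry_bound by blast
  define p where "p s = det (B + s *\<^sub>R mat 1)" for s
  define A where "A s = adj3 (B + s *\<^sub>R mat 1)" for s
  have pos: "0 < p s" if "0 \<le> s" for s
    using assms that by (simp add: p_def pos_def_det_pos pos_def_shift)
  have "((\<lambda>s. trace (A s) / (sqrt (p s) * p s)) has_integral - (-2 / sqrt (p 0))) {0..}"
  proof (rule has_integral_at_top_of_derivative)
    fix s :: real assume s: "0 \<le> s"
    show "((\<lambda>s. -2 / sqrt (p s)) has_real_derivative trace (A s) / (sqrt (p s) * p s))
        (at s within {0..})"
      using has_real_derivative_inverse_sqrt_det_shift[OF pos[OF s, unfolded p_def]]
      by (simp add: p_def A_def)
    have "\<bar>trace (A s)\<bar> \<le> 3 * K * (1 + s)^(2*1)"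
      using abs_trace_bounds(1)[where A="A s" and \<alpha>="K * (1 + s)^2"] adj[OF s] by (simp add: A_def mult.assoc)
    from inverse_square_decay[where k=1, OF m s lower[OF s, folded p_def] _ this] pos[OF s]
    show "\<bar>trace (A s) / (sqrt (p s) * p s)\<bar> \<le> 3 * K / (sqrt m * m) / (1 + s)^2"
      by (simp add: abs_div)
  next
    have "filterlim (\<lambda>s. sqrt (p s)) at_top at_top"
      unfolding p_def by (rule filterlim_compose[OF sqrt_at_top det_shift_tendsto_at_top[OF assms]])
    then show "((\<lambda>s. -2 / sqrt (p s)) \<longlongrightarrow> 0) at_top"
      by (intro tendsto_divide_0[OF tendsto_const] filterlim_at_top_imp_at_infinity)
  qed
  then show ?thesis by (simp add: p_def A_def)
qed

lemma has_integral_trace_contr_adj3_shift: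
  assumes "pos_def B"
  shows "((\<lambda>s. (trace (adj3 (B + s *\<^sub>R mat 1)) * trace (adj3 (B + s *\<^sub>R mat 1) ** M)
              + 2 * trace (adj3 (B + s *\<^sub>R mat 1) ** adj3 (B + s *\<^sub>R mat 1) ** M)) / 2
              / (sqrt (det (B + s *\<^sub>R mat 1)) * det (B + s *\<^sub>R mat 1)^2))
           has_integral trace (adj3 B ** M) / (sqrt (det B) * det B)) {0..}"
proof -
  obtain m where m: "0 < m" and lower: "\<And>s. 0 \<le> s \<Longrightarrow> m * (1 + s)^3 \<le> det (B + s *\<^sub>R mat 1)"
    using det_shift_lower_bound[OF assms] by blast
  obtain K where adj: "\<And>s i j. 0 \<le> s \<Longrightarrow> \<bar>adj3 (B + s *\<^sub>R mat 1) $ i $ j\<bar> \<le> K * (1 + s)^2"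
    using adj3_shift_entry_bound by blast
  define \<mu> where "\<mu> = (\<Sum>i\<in>UNIV. \<Sum>j\<in>UNIV. \<bar>M$i$j\<bar>)"
  define p where "p s = det (B + s *\<^sub>R mat 1)" for s
  define A where "A s = adj3 (B + s *\<^sub>R mat 1)" for s
  define N where "N s = (trace (A s) * trace (A s ** M) + 2 * trace (A s ** A s ** M)) / 2" for s
  have pos: "0 < p s" if "0 \<le> s" for s
    using assms that by (simp add: p_def pos_def_det_pos pos_def_shift)
  have "((\<lambda>s. N s / (sqrt (p s) * p s^2)) has_integral - (- trace (A 0 ** M) / (sqrt (p 0) * p 0))) {0..}"
  proof (rule has_integral_at_top_of_derivative)
    fix s :: real assume s: "0 \<le> s"
    show "((\<lambda>s. - trace (A s ** M) / (sqrt (p s) * p s)) has_real_derivative N s / (sqrt (p s) * p s^2))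
        (at s within {0..})"
      using has_real_derivative_trace_adj3_quotient_shift[OF pos[OF s, unfolded p_def]]
      by (simp add: p_def A_def N_def)
    have "\<bar>trace (A s) * trace (A s ** M) + 2 * trace (A s ** A s ** M)\<bar> \<le> 9 * (K * (1 + s)^2)^2 * \<mu>"
      using abs_trace_quadratic_bound[where A="A s" and \<alpha>="K * (1 + s)^2" and M=M] adj[OF s]
      by (simp add: A_def \<mu>_def)
    then have "\<bar>N s\<bar> \<le> 9/2 * K^2 * \<mu> * (1 + s)^(2*2)"
      by (simp add: N_def power_mult_distrib power_mult mult_ac)
    from inverse_square_decay[where k=2, OF m s lower[OF s, folded p_def] _ this] pos[OF s]
    show "\<bar>N s / (sqrt (p s) * p s^2)\<bar> \<le> 9/2 * K^2 * \<mu> / (sqrt m * m^2) / (1 + s)^2"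
      by (simp add: abs_div)
  next
    show "((\<lambda>s. - trace (A s ** M) / (sqrt (p s) * p s)) \<longlongrightarrow> 0) at_top"
    proof (rule tendsto_0_if_inverse_square_bound)
      fix s :: real assume s: "0 \<le> s"
      have "\<bar>trace (A s ** M)\<bar> \<le> K * \<mu> * (1 + s)^(2*1)"
        using abs_trace_bounds(2)[where A="A s" and \<alpha>="K * (1 + s)^2"] adj[OF s]
        by (simp add: A_def \<mu>_def mult_ac)
      from inverse_square_decay[where k=1, OF m s lower[OF s, folded p_def] _ this] pos[OF s]
      show "\<bar>- trace (A s ** M) / (sqrt (p s) * p s)\<bar> \<le> K * \<mu> / (sqrt m * m) / (1 + s)^2"
        by (simp add: abs_div)
    qed
  qed
  then show ?thesis by (simp add: p_def A_def N_def)
qed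

lemma trace_tensA:
  assumes "pos_def B"
  shows "trace (tensA B) = 1 / sqrt (det B)"
proof -
  let ?X = "\<lambda>s. B + s *\<^sub>R mat 1"
  let ?f = "\<lambda>s. (1 / (sqrt (det (?X s)) * det (?X s))) *\<^sub>R adj3 (?X s)"
  have "integral {0..} (\<lambda>s. (1 / sqrt (det (?X s))) *\<^sub>R matrix_inv (?X s)) = integral {0..} ?f"
    using assms
    by (intro integral_cong) (simp add: inverse_sqrt_det_scaleR_matrix_inv pos_def_det_pos pos_def_shift)
  moreover have "trace (integral {0..} ?f) = integral {0..} (\<lambda>s. trace (?f s))"
    using integral_linear[OF integrable_adj3_shift[OF assms] bounded_linear_trace] by (simp add: o_def)
  moreover have "integral {0..} (\<lambda>s. trace (?f s)) = 2 / sqrt (det B)"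
    using has_integral_trace_adj3_shift[OF assms] by (simp add: trace_scaleR integral_unique)
  ultimately show ?thesis by (simp add: tensA_def trace_scaleR)
qed

lemma trace_tensC:
  assumes "pos_def B" and "sym_mat M"
  shows "2 * trace (contr (tensC B) M) = trace (adj3 B ** M) / (sqrt (det B) * det B)"
proof -
  let ?X = "\<lambda>s. B + s *\<^sub>R mat 1"
  let ?g = "\<lambda>s. (1 / (sqrt (det (?X s)) * det (?X s)^2)) *\<^sub>R symz (tprod (adj3 (?X s)) (adj3 (?X s)))"
  have "integral {0..} (\<lambda>s. (1 / sqrt (det (?X s))) *\<^sub>R
      symz (tprod (matrix_inv (?X s)) (matrix_inv (?X s)))) = integral {0..} ?g"
    using assms
    by (intro integral_cong) (simp add: inverse_sqrt_det_scaleR_symz_matrix_inv pos_def_det_pos pos_def_shift)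
  moreover have "trace (contr (integral {0..} ?g) M) = integral {0..} (\<lambda>s. trace (contr (?g s) M))"
    using integral_linear[OF integrable_symz_adj3_shift[OF assms(1)] bounded_linear_trace_contr]
    by (simp add: o_def)
  moreover have "((\<lambda>s. trace (contr (?g s) M)) has_integral
      2/3 * (trace (adj3 B ** M) / (sqrt (det B) * det B))) {0..}"
  proof (rule has_integral_spike_finite[OF finite.emptyI _
        has_integral_mult_right[OF has_integral_trace_contr_adj3_shift[OF assms(1)]]])
    fix s :: real assume "s \<in> {0..} - {}"
    then have "0 < det (?X s)" using assms by (simp add: pos_def_det_pos pos_def_shift)
    then show "trace (contr (?g s) M) = 2/3 * ((trace (adj3 (?X s)) * trace (adj3 (?X s) ** M)
        + 2 * trace (adj3 (?X s) ** adj3 (?X s) ** M)) / 2 / (sqrt (det (?X s)) * det (?X s)^2))"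
      using assms sym_mat_adj3[OF sym_mat_shift]
      by (simp add: trace_contr_scaleR trace_contr_symz_tprod pos_def_def field_simps)
  qed
  ultimately show ?thesis by (simp add: tensC_def trace_contr_scaleR integral_unique)
qed

lemma ex_const_iff_inj_on:
  assumes "\<And>t. t \<in> I \<Longrightarrow> f t = \<phi> (g t)" and "inj_on \<phi> (g ` I)"
  shows "(\<exists>c. \<forall>t\<in>I. f t = c) \<longleftrightarrow> (\<exists>c. \<forall>t\<in>I. g t = c)"
  using assms unfolding inj_on_def by (metis image_eqI)

theorem mainTheorem6:
  shows "(\<forall>B M :: mat3. pos_def B \<and> det B = 1 \<and> sym_mat M \<longrightarrow>
            trace (matrix_inv B ** M) = 2 * trace (contr (tensC B) M))
       \<and> (\<forall>(Bt :: real \<Rightarrow> mat3) (I :: real set).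
            is_interval I \<and> 0 \<in> I \<and>
            (\<forall>t\<in>I. Bt differentiable (at t within I)) \<and>
            (\<forall>t\<in>I. pos_def (Bt t)) \<and> det (Bt 0) = 1 \<longrightarrow>
            ((\<exists>c. \<forall>t\<in>I. trace (tensA (Bt t)) = c) \<longleftrightarrow> (\<exists>c. \<forall>t\<in>I. det (Bt t) = c)))"
proof (intro conjI allI impI)
  fix B M :: mat3
  assume "pos_def B \<and> det B = 1 \<and> sym_mat M"
  then show "trace (matrix_inv B ** M) = 2 * trace (contr (tensC B) M)"
    using trace_tensC[of B M] by (simp add: matrix_inv_eq_adj3)
next
  fix Bt :: "real \<Rightarrow> mat3" and I :: "real set"
  assume "is_interval I \<and> 0 \<in> I \<and> (\<forall>t\<in>I. Bt differentiable (at t within I)) \<and>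
    (\<forall>t\<in>I. pos_def (Bt t)) \<and> det (Bt 0) = 1"
  then have "\<And>t. t \<in> I \<Longrightarrow> trace (tensA (Bt t)) = 1 / sqrt (det (Bt t))"
    and "(\<lambda>t. det (Bt t)) ` I \<subseteq> {0<..}"
    using trace_tensA pos_def_det_pos by auto
  moreover have "inj_on (\<lambda>x::real. 1 / sqrt x) {0<..}" by (auto simp: inj_on_def)
  ultimately show "(\<exists>c. \<forall>t\<in>I. trace (tensA (Bt t)) = c) \<longleftrightarrow> (\<exists>c. \<forall>t\<in>I. det (Bt t) = c)"
    by (intro ex_const_iff_inj_on) (auto intro: inj_on_subset)
qed

end
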